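(* Let $(\theta, \tau) \in \mathbb{T} \times \mathbb{R}$, and define the maps $R_{\theta, \tau}(x, \omega) := (x + \theta, \omega + \tau)$ on $\mathbb{T}\times\mathbb{R}$ and $t_\tau(\omega) := \omega + \tau$ on $\mathbb{R}$ (addition on the torus is mod $2\pi$). Let $(\mu_t)_{t\ge 0}$ be a solution of the MFG problem with intrinsic frequency distribution $g$, and set $\tilde{\mu}_t := (R_{\theta + \tau t, \tau})_{\#} \mu_t$ and $\tilde{g} := (t_\tau)_{\#} g$ (push-forward measures). Then $(\tilde{\mu}_t)_{t \ge 0}$ is a solution of the MFG problem with intrinsic frequency distribution $\tilde{g}$.
   Context: $\mathbb{T} = \mathbb{R}/(2\pi\mathbb{Z})$. $g \in \mathcal{P}(\mathbb{R})$ has finite first moment. For $x\in\mathbb{T}$ and $\mu\in\mathcal{P}(\mathbb{T}\times\mathbb{R})$, $c(x,\mu) := \int 2\sin^2(\frac{x-y}{2})\,\mu(\mathrm{d}y,\mathrm{d}\omega)$. On a filtered probability space with Brownian motion $B$, $\mathcal{A}$ denotes square-integrable progressively measurable real controls. Given a flow $(\mu_t)$ in $\mathcal{P}(\mathbb{T}\times\mathbb{R})$ with second marginal $g$, disintegrated as $\mu_t(\mathrm{d}x,\mathrm{d}\omega)=\mu_t^\omega(\mathrm{d}x)g(\mathrm{d}\omega)$, the cost for frequency $\omega$ is $J^{\omega,\mu}(\alpha) = \mathbb{E}\int_0^\infty e^{-\beta t}[\frac12\alpha_t^2 + \kappa c(X_t^{\omega,\alpha},\mu_t)]\mathrm{d}t$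 with $X^{\omega,\alpha}_t = X_0^\omega + \int_0^t\alpha_s\mathrm{d}s + \omega t + \sigma B_t$, $\mathcal{L}(X_0^\omega)=\mu_0^\omega$, $\kappa\ge0$, $\beta,\sigma>0$. $(\mu_t)$ is a solution of the MFG problem with intrinsic frequency distribution $g$ if: for all $t$ the second marginal of $\mu_t$ is $g$; and there is a Borel set $E$ with $g(E)=1$ such that for all $\omega\in E$ the disintegration holds and there exists $\alpha^\omega_*\in\mathcal{A}$ with $\inf_{\alpha\in\mathcal{A}} J^{\omega,\mu}(\alpha) = J^{\omega,\mu}(\alpha^\omega_* )$ and $\mathcal{L}(X_t^{\omega,\alpha^\omega_*}) = \mu_t^\omega$ for all $t\ge0$. *)

theory Defs
  imports "HOL-Probability.Probability"
begin

text \<open>Points of the torus T = R/(2 pi Z) are represented by their canonical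
  representatives in [0, 2 pi).  A measure on T x R is a probability measure on
  the Borel sets of real x real with full mass on [0, 2 pi) x R.\<close>

definition wrap :: "real \<Rightarrow> real" where
  "wrap x = x - 2 * pi * of_int \<lfloor>x / (2 * pi)\<rfloor>"

definition torus_set :: "real set" where
  "torus_set = {0..<2 * pi}"

definition is_prob_torus :: "real measure \<Rightarrow> bool" where
  "is_prob_torus m \<longleftrightarrow> prob_space m \<and> sets m = sets borel \<and> emeasure m torus_set = 1"

definition is_prob_torus_real :: "(real \<times> real) measure \<Rightarrow> bool" where
  "is_prob_torus_real m \<longleftrightarrow> prob_space m \<and> sets m = sets borel
     \<and> emeasure m (torus_set \<times> UNIV) = 1"

definition rot :: "real \<Rightarrow> real \<Rightarrow> real \<times> real \<Rightarrow> real \<times> real" where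
  "rot \<theta> \<tau> = (\<lambda>(x, w). (wrap (x + \<theta>), w + \<tau>))"

definition transl :: "real \<Rightarrow> real \<Rightarrow> real" where
  "transl \<tau> w = w + \<tau>"

definition cost_c :: "real \<Rightarrow> (real \<times> real) measure \<Rightarrow> real" where
  "cost_c x \<mu> = (\<integral>p. 2 * (sin ((x - fst p) / 2))\<^sup>2 \<partial>\<mu>)"

definition is_filtration :: "'a measure \<Rightarrow> (real \<Rightarrow> 'a measure) \<Rightarrow> bool" where
  "is_filtration M F \<longleftrightarrow>
     (\<forall>t\<ge>0. space (F t) = space M \<and> sets (F t) \<subseteq> sets M) \<and>
     (\<forall>s t. 0 \<le> s \<longrightarrow> s \<le> t \<longrightarrow> sets (F s) \<subseteq> sets (F t))"

definition is_brownian :: "'a measure \<Rightarrow> (real \<Rightarrow> 'a measure) \<Rightarrow> (real \<Rightarrow> 'a \<Rightarrow> real) \<Rightarrow> bool" where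
  "is_brownian M F B \<longleftrightarrow>
     (\<forall>w\<in>space M. B 0 w = 0) \<and>
     (\<forall>w\<in>space M. continuous_on {0..} (\<lambda>t. B t w)) \<and>
     (\<forall>t\<ge>0. B t \<in> borel_measurable (F t)) \<and>
     (\<forall>s t. 0 \<le> s \<longrightarrow> s < t \<longrightarrow>
        distributed M lborel (\<lambda>w. B t w - B s w) (normal_density 0 (sqrt (t - s))) \<and>
        (\<forall>A\<in>sets (F s). \<forall>C\<in>sets borel.
           measure M (A \<inter> ((\<lambda>w. B t w - B s w) -` C \<inter> space M))
             = measure M A * measure M ((\<lambda>w. B t w - B s w) -` C \<inter> space M)))"

definition filtered_bm_space ::
  "'a measure \<Rightarrow> (real \<Rightarrow> 'a measure) \<Rightarrow> (real \<Rightarrow> 'a \<Rightarrow> real) \<Rightarrow> bool" where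
  "filtered_bm_space M F B \<longleftrightarrow> prob_space M \<and> is_filtration M F \<and> is_brownian M F B"

definition prog_measurable :: "(real \<Rightarrow> 'a measure) \<Rightarrow> (real \<Rightarrow> 'a \<Rightarrow> real) \<Rightarrow> bool" where
  "prog_measurable F \<alpha> \<longleftrightarrow>
     (\<forall>t\<ge>0. (\<lambda>(s, w). \<alpha> s w) \<in> borel_measurable (restrict_space borel {0..t} \<Otimes>\<^sub>M F t))"

definition admissible :: "'a measure \<Rightarrow> (real \<Rightarrow> 'a measure) \<Rightarrow> (real \<Rightarrow> 'a \<Rightarrow> real) set" where
  "admissible M F = {\<alpha>. prog_measurable F \<alpha> \<and>
      (\<forall>T\<ge>0. (\<integral>\<^sup>+ w. (\<integral>\<^sup>+ s\<in>{0..T}. ennreal ((\<alpha> s w)\<^sup>2) \<partial>lborel) \<partial>M) < \<infinity>)}"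

definition state :: "real \<Rightarrow> (real \<Rightarrow> 'a \<Rightarrow> real) \<Rightarrow> ('a \<Rightarrow> real) \<Rightarrow> real
                     \<Rightarrow> (real \<Rightarrow> 'a \<Rightarrow> real) \<Rightarrow> real \<Rightarrow> 'a \<Rightarrow> real" where
  "state \<sigma> B X0 \<omega> \<alpha> t w = X0 w + (\<integral>s\<in>{0..t}. \<alpha> s w \<partial>lborel) + \<omega> * t + \<sigma> * B t w"

definition cost_J :: "'a measure \<Rightarrow> (real \<Rightarrow> 'a \<Rightarrow> real) \<Rightarrow> real \<Rightarrow> real \<Rightarrow> real
     \<Rightarrow> ('a \<Rightarrow> real) \<Rightarrow> real \<Rightarrow> (real \<Rightarrow> (real \<times> real) measure) \<Rightarrow> (real \<Rightarrow> 'a \<Rightarrow> real) \<Rightarrow> ennreal" where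
  "cost_J M B \<sigma> \<beta> \<kappa> X0 \<omega> \<mu> \<alpha> =
     (\<integral>\<^sup>+ w. (\<integral>\<^sup>+ t\<in>{0..}. ennreal (exp (- \<beta> * t) *
         ((1/2) * (\<alpha> t w)\<^sup>2 + \<kappa> * cost_c (state \<sigma> B X0 \<omega> \<alpha> t w) (\<mu> t))) \<partial>lborel) \<partial>M)"

text \<open>(mu_t) is a solution of the MFG problem with intrinsic frequency distribution g.
  K t omega is the disintegration mu_t^omega, E the full-measure set of frequencies.\<close>
definition mfg_solution ::
  "'a measure \<Rightarrow> (real \<Rightarrow> 'a measure) \<Rightarrow> (real \<Rightarrow> 'a \<Rightarrow> real) \<Rightarrow> real \<Rightarrow> real \<Rightarrow> real
   \<Rightarrow> real measure \<Rightarrow> (real \<Rightarrow> (real \<times> real) measure) \<Rightarrow> bool" where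
  "mfg_solution M F B \<sigma> \<beta> \<kappa> g \<mu> \<longleftrightarrow>
     (\<forall>t\<ge>0. is_prob_torus_real (\<mu> t) \<and> distr (\<mu> t) borel snd = g) \<and>
     (\<exists>K :: real \<Rightarrow> real \<Rightarrow> real measure. \<exists>E \<in> sets borel. emeasure g E = 1 \<and>
        (\<forall>t\<ge>0. \<forall>A\<in>sets borel. (\<lambda>w. emeasure (K t w) A) \<in> borel_measurable borel) \<and>
        (\<forall>t\<ge>0. \<forall>A\<in>sets borel. \<forall>C\<in>sets borel.
           emeasure (\<mu> t) (A \<times> C) = (\<integral>\<^sup>+ w\<in>C. emeasure (K t w) A \<partial>g)) \<and>
        (\<forall>\<omega>\<in>E. (\<forall>t\<ge>0. is_prob_torus (K t \<omega>)) \<and>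
           (\<exists>X0. X0 \<in> borel_measurable (F 0) \<and> distr M borel (\<lambda>w. wrap (X0 w)) = K 0 \<omega> \<and>
              (\<exists>\<alpha>s\<in>admissible M F.
                 (INF \<alpha>\<in>admissible M F. cost_J M B \<sigma> \<beta> \<kappa> X0 \<omega> \<mu> \<alpha>)
                   = cost_J M B \<sigma> \<beta> \<kappa> X0 \<omega> \<mu> \<alpha>s \<and>
                 (\<forall>t\<ge>0. distr M borel (\<lambda>w. wrap (state \<sigma> B X0 \<omega> \<alpha>s t w)) = K t \<omega>)))))"

end

theory Submission
  imports Defs
begin

text \<open>A player of frequency \<omega> started at X0 and a player of frequency
  \<omega> + \<tau> started at X0 + \<theta> using the same control have states differing by \<theta> + \<tau> t,
  and since the interaction cost only depends on differences of angles modulo 2 pi, the costs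
  of every control agree once the population is rotated along.  So optimal controls stay
  optimal, and the laws of the optimal states, the disintegration kernels and the frequency
  marginal are transported by the rotation and the translation.\<close>

lemma wrap_add_2pi_multiple: "wrap (x + 2 * pi * of_int k) = wrap x"
proof -
  have "(x + 2 * pi * of_int k) / (2 * pi) = x / (2 * pi) + of_int k"
    by (simp add: field_simps)
  then have "\<lfloor>(x + 2 * pi * of_int k) / (2 * pi)\<rfloor> = \<lfloor>x / (2 * pi)\<rfloor> + k"
    by simp
  then show ?thesis
    unfolding wrap_def by (simp add: algebra_simps)
qed

lemma wrap_eq_add_2pi_multiple: obtains k :: int where "wrap x = x + 2 * pi * of_int k"
  using that[of "- \<lfloor>x / (2 * pi)\<rfloor>"] by (simp add: wrap_def)

lemma wrap_wrap_add: "wrap (wrap x + y) = wrap (x + y)"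
proof -
  obtain k :: int where "wrap x = x + 2 * pi * of_int k"
    by (rule wrap_eq_add_2pi_multiple)
  then show ?thesis
    using wrap_add_2pi_multiple[of "x + y" k] by (simp add: algebra_simps)
qed

lemma wrap_in_torus_set: "wrap x \<in> torus_set"
proof -
  have "wrap x = 2 * pi * frac (x / (2 * pi))"
    by (simp add: wrap_def frac_def algebra_simps)
  then show ?thesis
    using frac_ge_0[of "x / (2 * pi)"] frac_lt_1[of "x / (2 * pi)"] by (simp add: torus_set_def)
qed

lemma borel_measurable_wrap [measurable]: "wrap \<in> borel_measurable borel"
  unfolding wrap_def by measurable

lemma borel_measurable_rot [measurable]: "rot c \<tau> \<in> borel_measurable borel"
  unfolding rot_def borel_prod[symmetric] by measurable

lemma borel_measurable_transl [measurable]: "transl \<tau> \<in> borel_measurable borel"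
  unfolding transl_def by measurable

lemma vimage_rot_Times: "rot c \<tau> -` (A \<times> C) = (\<lambda>x. wrap (x + c)) -` A \<times> transl \<tau> -` C"
  by (auto simp: rot_def transl_def)

lemma sin_half_squared_add_2pi_multiple: "(sin ((y + 2 * pi * of_int k) / 2))\<^sup>2 = (sin (y / 2))\<^sup>2"
proof -
  have half: "(sin (z / 2))\<^sup>2 = (1 - cos z) / 2" for z :: real
    using cos_double_sin[of "z / 2"] by simp
  show ?thesis
    unfolding half by (simp add: cos_add)
qed

lemma cost_c_distr_rot:
  assumes "sets m = sets (borel :: (real \<times> real) measure)"
  shows "cost_c (x + c) (distr m borel (rot c \<tau>)) = cost_c x m"
proof -
  have rot_meas: "rot c \<tau> \<in> measurable m borel"
    using assms by simp
  have "cost_c (x + c) (distr m borel (rot c \<tau>)) = (\<integral>p. 2 * (sin ((x + c - fst (rot c \<tau> p)) / 2))\<^sup>2 \<partial>m)"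
    unfolding cost_c_def using rot_meas by (simp add: integral_distr borel_prod[symmetric])
  also have "\<dots> = cost_c x m"
    unfolding cost_c_def
  proof (rule Bochner_Integration.integral_cong[OF refl])
    fix p :: "real \<times> real"
    obtain k :: int where k: "wrap (fst p + c) = fst p + c + 2 * pi * of_int k"
      by (rule wrap_eq_add_2pi_multiple)
    have "x + c - fst (rot c \<tau> p) = (x - fst p) + 2 * pi * of_int (- k)"
      using k by (cases p) (simp add: rot_def)
    then show "2 * (sin ((x + c - fst (rot c \<tau> p)) / 2))\<^sup>2 = 2 * (sin ((x - fst p) / 2))\<^sup>2"
      by (simp only: sin_half_squared_add_2pi_multiple)
  qed
  finally show ?thesis .
qed

text \<open>The state process is not known to be measurable (its drift is a pathwise integral of
  the control), so image measures of it are handled without measurability: if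
  \<^term>\<open>distr M N f\<close> is not the null measure, the set function it is built from
  was a measure on \<^term>\<open>sets N\<close>.\<close>

lemma emeasure_distr_nonnull:
  assumes "emeasure (distr M N f) (space N) \<noteq> 0" and "A \<in> sets N"
  shows "emeasure (distr M N f) A = emeasure M (f -` A \<inter> space M)"
  using assms by (simp add: distr_def emeasure_measure_of_conv sets.sigma_sets_eq split: if_splits)

lemma distr_distr_nonnull:
  assumes "emeasure (distr M N f) (space N) \<noteq> 0" and "f \<in> space M \<rightarrow> space N"
    and "g \<in> measurable N L"
  shows "distr (distr M N f) L g = distr M L (g \<circ> f)"
proof -
  have "distr M L (g \<circ> f) = measure_of (space L) (sets L) (emeasure (distr (distr M N f) L g))"
    unfolding distr_def[of M L]
  proof (rule measure_of_eq)
    fix A assume "A \<in> sigma_sets (space L) (sets L)"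
    then have A: "A \<in> sets L"
      by (simp add: sets.sigma_sets_eq)
    have "emeasure (distr (distr M N f) L g) A = emeasure (distr M N f) (g -` A \<inter> space N)"
      using assms(3) A by (simp add: emeasure_distr)
    also have "\<dots> = emeasure M (f -` (g -` A \<inter> space N) \<inter> space M)"
      using emeasure_distr_nonnull[OF assms(1) measurable_sets[OF assms(3) A]] by simp
    also have "\<dots> = emeasure M ((g \<circ> f) -` A \<inter> space M)"
      using assms(2) by (intro arg_cong[where f = "emeasure M"]) auto
    finally show "emeasure M ((g \<circ> f) -` A \<inter> space M) = emeasure (distr (distr M N f) L g) A"
      by simp
  qed (rule sets.space_closed)
  then show ?thesis
    using measure_of_of_measure[of "distr (distr M N f) L g"] by simp
qed

lemma (in prob_space) emeasure_distr_eq_1: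
  assumes "f \<in> measurable M N" and "S \<in> sets N" and "f \<in> space M \<rightarrow> S"
  shows "emeasure (distr M N f) S = 1"
proof -
  have "f -` S \<inter> space M = space M"
    using assms(3) by auto
  then show ?thesis
    using assms(1,2) by (simp add: emeasure_distr emeasure_space_1)
qed

lemma is_prob_torus_real_distr_rot:
  assumes "is_prob_torus_real m"
  shows "is_prob_torus_real (distr m borel (rot c \<tau>))"
proof -
  interpret prob_space m
    using assms by (simp add: is_prob_torus_real_def)
  have sets_m: "sets m = sets borel"
    using assms by (simp add: is_prob_torus_real_def)
  have "torus_set \<times> UNIV \<in> sets (borel :: (real \<times> real) measure)"
    unfolding borel_prod[symmetric] by (auto simp: torus_set_def)
  moreover have "rot c \<tau> \<in> space m \<rightarrow> torus_set \<times> UNIV"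
    by (auto simp: rot_def wrap_in_torus_set)
  ultimately show ?thesis
    using sets_m by (simp add: is_prob_torus_real_def prob_space_distr emeasure_distr_eq_1)
qed

lemma is_prob_torus_distr_wrap_add:
  assumes "is_prob_torus m"
  shows "is_prob_torus (distr m borel (\<lambda>x. wrap (x + c)))"
proof -
  interpret prob_space m
    using assms by (simp add: is_prob_torus_def)
  have "sets m = sets borel"
    using assms by (simp add: is_prob_torus_def)
  moreover have "torus_set \<in> sets borel"
    by (simp add: torus_set_def)
  ultimately show ?thesis
    by (simp add: is_prob_torus_def prob_space_distr emeasure_distr_eq_1 wrap_in_torus_set)
qed

lemma distr_snd_distr_rot:
  assumes "sets m = sets (borel :: (real \<times> real) measure)"
  shows "distr (distr m borel (rot c \<tau>)) borel snd = distr (distr m borel snd) borel (transl \<tau>)"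
proof -
  have "snd \<circ> rot c \<tau> = transl \<tau> \<circ> snd"
    by (auto simp: rot_def transl_def)
  moreover have "snd \<in> borel_measurable (borel :: (real \<times> real) measure)"
    unfolding borel_prod[symmetric] by simp
  ultimately show ?thesis
    using assms by (simp add: distr_distr)
qed

lemma distr_wrap_add:
  assumes "distr M borel (\<lambda>w. wrap (f w)) = m" and "prob_space m"
  shows "distr M borel (\<lambda>w. wrap (f w + c)) = distr m borel (\<lambda>x. wrap (x + c))"
proof -
  have "space m = UNIV"
    using assms(1) by (metis space_distr space_borel)
  then have "emeasure (distr M borel (\<lambda>w. wrap (f w))) (space borel) \<noteq> 0"
    using assms(1) prob_space.emeasure_space_1[OF assms(2)] by simp
  then have "distr m borel (\<lambda>x. wrap (x + c)) = distr M borel ((\<lambda>x. wrap (x + c)) \<circ> (\<lambda>w. wrap (f w)))"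
    unfolding assms(1)[symmetric] by (rule distr_distr_nonnull) auto
  then show ?thesis
    by (simp add: comp_def wrap_wrap_add)
qed

definition disintegration :: "(real \<times> real) measure \<Rightarrow> real measure \<Rightarrow> (real \<Rightarrow> real measure) \<Rightarrow> bool" where
  "disintegration \<mu> g K \<longleftrightarrow>
     (\<forall>A\<in>sets borel. (\<lambda>\<omega>. emeasure (K \<omega>) A) \<in> borel_measurable borel) \<and>
     (\<forall>A\<in>sets borel. \<forall>C\<in>sets borel. emeasure \<mu> (A \<times> C) = (\<integral>\<^sup>+ \<omega>\<in>C. emeasure (K \<omega>) A \<partial>g))"

definition optimal_state_laws ::
  "'a measure \<Rightarrow> (real \<Rightarrow> 'a measure) \<Rightarrow> (real \<Rightarrow> 'a \<Rightarrow> real) \<Rightarrow> real \<Rightarrow> real \<Rightarrow> real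
   \<Rightarrow> (real \<Rightarrow> (real \<times> real) measure) \<Rightarrow> real \<Rightarrow> (real \<Rightarrow> real measure) \<Rightarrow> bool" where
  "optimal_state_laws M F B \<sigma> \<beta> \<kappa> \<mu> \<omega> \<nu> \<longleftrightarrow>
     (\<exists>X0. X0 \<in> borel_measurable (F 0) \<and> distr M borel (\<lambda>w. wrap (X0 w)) = \<nu> 0 \<and>
        (\<exists>\<alpha>s\<in>admissible M F.
           (INF \<alpha>\<in>admissible M F. cost_J M B \<sigma> \<beta> \<kappa> X0 \<omega> \<mu> \<alpha>) = cost_J M B \<sigma> \<beta> \<kappa> X0 \<omega> \<mu> \<alpha>s \<and>
           (\<forall>t\<ge>0. distr M borel (\<lambda>w. wrap (state \<sigma> B X0 \<omega> \<alpha>s t w)) = \<nu> t)))"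

lemma mfg_solution_iff:
  "mfg_solution M F B \<sigma> \<beta> \<kappa> g \<mu> \<longleftrightarrow>
     (\<forall>t\<ge>0. is_prob_torus_real (\<mu> t) \<and> distr (\<mu> t) borel snd = g) \<and>
     (\<exists>K. \<exists>E\<in>sets borel. emeasure g E = 1 \<and> (\<forall>t\<ge>0. disintegration (\<mu> t) g (K t)) \<and>
        (\<forall>\<omega>\<in>E. (\<forall>t\<ge>0. is_prob_torus (K t \<omega>)) \<and>
           optimal_state_laws M F B \<sigma> \<beta> \<kappa> \<mu> \<omega> (\<lambda>t. K t \<omega>)))"
  unfolding mfg_solution_def disintegration_def optimal_state_laws_def
  by (simp only: imp_conjR all_conj_distrib conj_assoc)

lemma state_shift:
  "state \<sigma> B (\<lambda>w. X0 w + \<theta>) (\<omega> + \<tau>) \<alpha> t w = state \<sigma> B X0 \<omega> \<alpha> t w + (\<theta> + \<tau> * t)"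
  by (simp add: state_def algebra_simps)

lemma cost_J_shift:
  assumes "\<And>t. t \<ge> 0 \<Longrightarrow> sets (\<mu> t) = sets borel"
  shows "cost_J M B \<sigma> \<beta> \<kappa> (\<lambda>w. X0 w + \<theta>) (\<omega> + \<tau>) (\<lambda>t. distr (\<mu> t) borel (rot (\<theta> + \<tau> * t) \<tau>)) \<alpha>
       = cost_J M B \<sigma> \<beta> \<kappa> X0 \<omega> \<mu> \<alpha>"
  unfolding cost_J_def
proof (intro nn_integral_cong)
  fix w t
  have "t \<ge> 0 \<Longrightarrow> cost_c (state \<sigma> B (\<lambda>w. X0 w + \<theta>) (\<omega> + \<tau>) \<alpha> t w) (distr (\<mu> t) borel (rot (\<theta> + \<tau> * t) \<tau>))
      = cost_c (state \<sigma> B X0 \<omega> \<alpha> t w) (\<mu> t)"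
    unfolding state_shift by (rule cost_c_distr_rot[OF assms])
  then show "ennreal (exp (- \<beta> * t) * ((1/2) * (\<alpha> t w)\<^sup>2 + \<kappa> * cost_c (state \<sigma> B (\<lambda>w. X0 w + \<theta>) (\<omega> + \<tau>) \<alpha> t w) (distr (\<mu> t) borel (rot (\<theta> + \<tau> * t) \<tau>)))) * indicator {0..} t
      = ennreal (exp (- \<beta> * t) * ((1/2) * (\<alpha> t w)\<^sup>2 + \<kappa> * cost_c (state \<sigma> B X0 \<omega> \<alpha> t w) (\<mu> t))) * indicator {0..} t"
    by (cases "t \<ge> 0") auto
qed

lemma optimal_state_laws_shift:
  assumes opt: "optimal_state_laws M F B \<sigma> \<beta> \<kappa> \<mu> \<omega> \<nu>"
    and sets_\<mu>: "\<And>t. t \<ge> 0 \<Longrightarrow> sets (\<mu> t) = sets borel"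
    and prob_\<nu>: "\<And>t. t \<ge> 0 \<Longrightarrow> prob_space (\<nu> t)"
  shows "optimal_state_laws M F B \<sigma> \<beta> \<kappa> (\<lambda>t. distr (\<mu> t) borel (rot (\<theta> + \<tau> * t) \<tau>)) (\<omega> + \<tau>)
           (\<lambda>t. distr (\<nu> t) borel (\<lambda>x. wrap (x + (\<theta> + \<tau> * t))))"
proof -
  obtain X0 \<alpha>s where X0: "X0 \<in> borel_measurable (F 0)" "distr M borel (\<lambda>w. wrap (X0 w)) = \<nu> 0"
    and \<alpha>s: "\<alpha>s \<in> admissible M F"
      "(INF \<alpha>\<in>admissible M F. cost_J M B \<sigma> \<beta> \<kappa> X0 \<omega> \<mu> \<alpha>) = cost_J M B \<sigma> \<beta> \<kappa> X0 \<omega> \<mu> \<alpha>s"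
    and laws: "\<And>t. t \<ge> 0 \<Longrightarrow> distr M borel (\<lambda>w. wrap (state \<sigma> B X0 \<omega> \<alpha>s t w)) = \<nu> t"
    using opt unfolding optimal_state_laws_def by blast
  have "(\<lambda>w. X0 w + \<theta>) \<in> borel_measurable (F 0)"
    using X0(1) by simp
  moreover have "distr M borel (\<lambda>w. wrap (X0 w + \<theta>)) = distr (\<nu> 0) borel (\<lambda>x. wrap (x + (\<theta> + \<tau> * 0)))"
    using distr_wrap_add[OF X0(2) prob_\<nu>] by simp
  moreover have "distr M borel (\<lambda>w. wrap (state \<sigma> B (\<lambda>w. X0 w + \<theta>) (\<omega> + \<tau>) \<alpha>s t w))
      = distr (\<nu> t) borel (\<lambda>x. wrap (x + (\<theta> + \<tau> * t)))" if "t \<ge> 0" for t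
    unfolding state_shift using distr_wrap_add[OF laws prob_\<nu>] that by simp
  ultimately show ?thesis
    unfolding optimal_state_laws_def
    using \<alpha>s by (intro exI[of _ "\<lambda>w. X0 w + \<theta>"] conjI bexI[OF _ \<alpha>s(1)])
                 (auto simp: cost_J_shift[OF sets_\<mu>])
qed

text \<open>Off the full-measure set E the kernel K need not consist of Borel measures, so there
  the shifted kernel is taken to be the null measure.\<close>

definition shift_kernel :: "real set \<Rightarrow> real \<Rightarrow> real \<Rightarrow> (real \<Rightarrow> real measure) \<Rightarrow> real \<Rightarrow> real measure" where
  "shift_kernel E c \<tau> K \<omega> =
     (if \<omega> - \<tau> \<in> E then distr (K (\<omega> - \<tau>)) borel (\<lambda>x. wrap (x + c)) else null_measure borel)"

lemma optimal_state_laws_shift_kernel: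
  assumes "\<omega> - \<tau> \<in> E"
    and opt: "optimal_state_laws M F B \<sigma> \<beta> \<kappa> \<mu> (\<omega> - \<tau>) (\<lambda>t. K t (\<omega> - \<tau>))"
    and K: "\<And>t. t \<ge> 0 \<Longrightarrow> is_prob_torus (K t (\<omega> - \<tau>))"
    and sets_\<mu>: "\<And>t. t \<ge> 0 \<Longrightarrow> sets (\<mu> t) = sets borel"
  shows "(\<forall>t\<ge>0. is_prob_torus (shift_kernel E (\<theta> + \<tau> * t) \<tau> (K t) \<omega>)) \<and>
    optimal_state_laws M F B \<sigma> \<beta> \<kappa> (\<lambda>t. distr (\<mu> t) borel (rot (\<theta> + \<tau> * t) \<tau>)) \<omega>
      (\<lambda>t. shift_kernel E (\<theta> + \<tau> * t) \<tau> (K t) \<omega>)"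
proof -
  have "optimal_state_laws M F B \<sigma> \<beta> \<kappa> (\<lambda>t. distr (\<mu> t) borel (rot (\<theta> + \<tau> * t) \<tau>)) (\<omega> - \<tau> + \<tau>)
      (\<lambda>t. distr (K t (\<omega> - \<tau>)) borel (\<lambda>x. wrap (x + (\<theta> + \<tau> * t))))"
    using K by (intro optimal_state_laws_shift[OF opt sets_\<mu>]) (simp_all add: is_prob_torus_def)
  with assms show ?thesis
    by (simp add: shift_kernel_def is_prob_torus_distr_wrap_add)
qed

lemma disintegration_shift:
  assumes dis: "disintegration \<mu> g K"
    and sets_\<mu>: "sets \<mu> = sets borel" and sets_g: "sets g = sets borel"
    and E: "E \<in> sets borel" "AE \<omega> in g. \<omega> \<in> E"
    and sets_K: "\<And>\<omega>. \<omega> \<in> E \<Longrightarrow> sets (K \<omega>) = sets borel"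
  shows "disintegration (distr \<mu> borel (rot c \<tau>)) (distr g borel (transl \<tau>)) (shift_kernel E c \<tau> K)"
    (is "disintegration ?\<mu> ?g ?K")
proof -
  let ?h = "\<lambda>x. wrap (x + c)"
  have vimage_h: "?h -` A \<in> sets borel" if "A \<in> sets borel" for A
    using that by (intro measurable_sets_borel) simp_all
  have vimage_transl: "transl \<tau> -` C \<in> sets borel" if "C \<in> sets borel" for C
    using that by (intro measurable_sets_borel) simp_all
  have emeasure_K: "emeasure (?K \<omega>) A = (if \<omega> - \<tau> \<in> E then emeasure (K (\<omega> - \<tau>)) (?h -` A) else 0)"
    if "A \<in> sets borel" for \<omega> A
  proof (cases "\<omega> - \<tau> \<in> E")
    case True
    then have "?h \<in> measurable (K (\<omega> - \<tau>)) borel" "space (K (\<omega> - \<tau>)) = UNIV"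
      using sets_K[OF True] by (simp, metis sets_eq_imp_space_eq space_borel)
    with True that show ?thesis
      by (simp add: shift_kernel_def emeasure_distr)
  qed (simp add: shift_kernel_def)
  have measurable_K: "(\<lambda>\<omega>. emeasure (?K \<omega>) A) \<in> borel_measurable borel" if A: "A \<in> sets borel" for A
  proof -
    have "(\<lambda>\<omega>. emeasure (K \<omega>) (?h -` A)) \<in> borel_measurable borel"
      using dis vimage_h[OF A] by (simp add: disintegration_def)
    moreover have "Measurable.pred borel (\<lambda>\<omega>. \<omega> - \<tau> \<in> E)"
      using E(1) by measurable
    ultimately show ?thesis
      unfolding emeasure_K[OF A] by measurable
  qed
  have "emeasure ?\<mu> (A \<times> C) = (\<integral>\<^sup>+ \<omega>\<in>C. emeasure (?K \<omega>) A \<partial>?g)"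
    if A: "A \<in> sets borel" and C: "C \<in> sets borel" for A C
  proof -
    have "A \<times> C \<in> sets (borel :: (real \<times> real) measure)"
      unfolding borel_prod[symmetric] using A C by simp
    then have "emeasure ?\<mu> (A \<times> C) = emeasure \<mu> (?h -` A \<times> transl \<tau> -` C)"
      using sets_\<mu> by (simp add: emeasure_distr vimage_rot_Times sets_eq_imp_space_eq[OF sets_\<mu>])
    also have "\<dots> = (\<integral>\<^sup>+ \<omega>\<in>transl \<tau> -` C. emeasure (K \<omega>) (?h -` A) \<partial>g)"
      using dis vimage_h[OF A] vimage_transl[OF C] by (simp add: disintegration_def)
    also have "\<dots> = (\<integral>\<^sup>+ \<omega>. emeasure (?K (transl \<tau> \<omega>)) A * indicator C (transl \<tau> \<omega>) \<partial>g)"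
    proof (rule nn_integral_cong_AE)
      show "AE \<omega> in g. emeasure (K \<omega>) (?h -` A) * indicator (transl \<tau> -` C) \<omega>
          = emeasure (?K (transl \<tau> \<omega>)) A * indicator C (transl \<tau> \<omega>)"
        using E(2)
      proof eventually_elim
        case (elim \<omega>)
        then show ?case
          using emeasure_K[OF A, of "transl \<tau> \<omega>"] by (simp add: transl_def indicator_def)
      qed
    qed
    also have "\<dots> = (\<integral>\<^sup>+ \<omega>\<in>C. emeasure (?K \<omega>) A \<partial>?g)"
      using measurable_K[OF A] C sets_g by (simp add: nn_integral_distr)
    finally show ?thesis .
  qed
  with measurable_K show ?thesis
    by (simp add: disintegration_def)
qed

theorem lemma2p2:
  fixes M :: "'a measure" and F :: "real \<Rightarrow> 'a measure" and B :: "real \<Rightarrow> 'a \<Rightarrow> real"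
    and \<sigma> \<beta> \<kappa> \<theta> \<tau> :: real and g :: "real measure"
    and \<mu> :: "real \<Rightarrow> (real \<times> real) measure"
  assumes "filtered_bm_space M F B"
    and "\<sigma> > 0" and "\<beta> > 0" and "\<kappa> \<ge> 0"
    and "prob_space g" and "sets g = sets borel" and "integrable g (\<lambda>w. w)"
    and "\<theta> \<in> torus_set"
    and "mfg_solution M F B \<sigma> \<beta> \<kappa> g \<mu>"
  shows "mfg_solution M F B \<sigma> \<beta> \<kappa> (distr g borel (transl \<tau>))
           (\<lambda>t. distr (\<mu> t) borel (rot (\<theta> + \<tau> * t) \<tau>))"
proof -
  obtain K E where marginals: "\<And>t. t \<ge> 0 \<Longrightarrow> is_prob_torus_real (\<mu> t) \<and> distr (\<mu> t) borel snd = g"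
    and E: "E \<in> sets borel" "emeasure g E = 1"
    and dis: "\<And>t. t \<ge> 0 \<Longrightarrow> disintegration (\<mu> t) g (K t)"
    and K: "\<And>\<omega> t. \<omega> \<in> E \<Longrightarrow> t \<ge> 0 \<Longrightarrow> is_prob_torus (K t \<omega>)"
    and opt: "\<And>\<omega>. \<omega> \<in> E \<Longrightarrow> optimal_state_laws M F B \<sigma> \<beta> \<kappa> \<mu> \<omega> (\<lambda>t. K t \<omega>)"
    using assms(9) unfolding mfg_solution_iff by metis
  have sets_\<mu>: "\<And>t. t \<ge> 0 \<Longrightarrow> sets (\<mu> t) = sets borel"
    using marginals by (simp add: is_prob_torus_real_def)
  have AE_E: "AE \<omega> in g. \<omega> \<in> E"
    using prob_space.AE_prob_1[OF assms(5), of E] E(2) by (simp add: measure_def)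
  define E' where "E' = (\<lambda>\<omega>. \<omega> - \<tau>) -` E"
  have E': "E' \<in> sets borel" "emeasure (distr g borel (transl \<tau>)) E' = 1"
    using E assms(6) by (simp_all add: E'_def emeasure_distr measurable_sets_borel transl_def
        vimage_def sets_eq_imp_space_eq[OF assms(6)])
  define \<mu>' where "\<mu>' t = distr (\<mu> t) borel (rot (\<theta> + \<tau> * t) \<tau>)" for t
  define K' where "K' t = shift_kernel E (\<theta> + \<tau> * t) \<tau> (K t)" for t
  have "is_prob_torus_real (\<mu>' t)" "distr (\<mu>' t) borel snd = distr g borel (transl \<tau>)"
    "disintegration (\<mu>' t) (distr g borel (transl \<tau>)) (K' t)" if "t \<ge> 0" for t
    using marginals[OF that] sets_\<mu>[OF that] dis[OF that] K[OF _ that] AE_E E(1) assms(6)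
    unfolding \<mu>'_def K'_def
    by (simp_all add: is_prob_torus_real_distr_rot distr_snd_distr_rot disintegration_shift is_prob_torus_def)
  moreover have "(\<forall>t\<ge>0. is_prob_torus (K' t \<omega>)) \<and> optimal_state_laws M F B \<sigma> \<beta> \<kappa> \<mu>' \<omega> (\<lambda>t. K' t \<omega>)"
    if "\<omega> \<in> E'" for \<omega>
    using that opt K sets_\<mu> unfolding E'_def \<mu>'_def K'_def
    by (intro optimal_state_laws_shift_kernel) auto
  ultimately show ?thesis
    unfolding mfg_solution_iff \<mu>'_def[symmetric] using E'
    by (intro conjI exI[of _ K'] bexI[OF _ E'(1)]) auto
qed

end
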